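(* Let $\mathcal{T}$ be an MPQ-tree of an interval graph $G=(V,E)$ and let $x\neq y$ be vertices with $node(x)=node(y)=P$, where $P$ is a P-node that is a leaf of $\mathcal{T}$. Then $(x,y)$ is an interval edge, i.e. $G-(x,y)$ is an interval graph.
   Context: Graphs are finite and simple; for $G=(V,E)$ and $e\in E$, $G-e=(V,E\setminus\{e\})$. An edge $(x,y)\in E$ of an interval graph $G$ is an interval edge if $G-(x,y)$ is an interval graph. An MPQ-tree of an interval graph $G=(V,E)$, $V=\{1,\dots,n\}$, is a rooted plane tree whose nodes are P-nodes and Q-nodes. Each P-node carries a (possibly empty) set of vertices. A Q-node has $k\ge 3$ ordered positions $1,\dots,k$; position $i$ carries a set $S_i\subseteq V$ (the $i$-th section) and a child subtree $T_i$, which may be empty. Every vertex $v$ is assigned to exactly one node $node(v)$: either $v$ lies in the set of the P-node $node(v)$, or $node(v)$ is a Q-node and $v$ lies exactly in the sections $S_{l(v)},\dots,S_{r(v)}$ of it, with $l(v)<r(v)$. For a node with child subtrees $T_1,\dots,T_k$, $V_i$ denotes the set of vertices assigned to nodes of $T_i$ ($V_i=\emptyset$ if $T_i$ is empty). The maximal cliques of $G$ are in bijection with the descending paths from the root which at a P-node continue into one of its children (stopping if there is none) and at a Q-node choose a position $i$ and continue into $T_i$ (stopping if $T_i$ is empty); the clique is the union of the sets of the visited P-nodes and the chosen sections. Reading these cliques left to right gives a linear order of the maximal cliques, and the orders obtained this way after arbitrarily permuting children of P-nodes and reversing the positions of Q-nodes are exactly the orders of the maximal cliques of $G$ in which the cliques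 containing any fixed vertex are consecutive. Moreover, for every Q-node with sections $S_1,\dots,S_k$: (a) $V_1\neq\emptyset$ and $V_k\ne\emptyset$; (b) $S_1\subseteq S_2$ and $S_k\subseteq S_{k-1}$; (c) $S_{i-1}\cap S_i\neq\emptyset$ for $2\le i\le k$; (d) $S_{i-1}\neq S_i$ for $2\le i\le k$; (e) $(S_i\cap S_{i+1})\setminus S_1\neq\emptyset$ and $(S_{i-1}\cap S_i)\setminus S_k\neq\emptyset$ for $2\le i\le k-1$; (f) $(S_{i-1}\cup V_{i-1})\setminus S_i\neq\emptyset$ and $(S_i\cup V_i)\setminus S_{i-1}\neq\emptyset$ for $2\le i\le k$; and further (g) no empty P-node has an empty P-node as its parent, (h) no P-node has exactly one child whose root is a P-node, (i) every child subtree of a P-node is nonempty. *)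

theory Defs
  imports Complex_Main "HOL-Library.Multiset"
begin

definition simple_graph :: "'a set \<Rightarrow> 'a set set \<Rightarrow> bool" where
  "simple_graph V E \<longleftrightarrow> finite V \<and> (\<forall>e\<in>E. \<exists>u v. e = {u, v} \<and> u \<noteq> v \<and> u \<in> V \<and> v \<in> V)"

definition interval_graph :: "'a set \<Rightarrow> 'a set set \<Rightarrow> bool" where
  "interval_graph V E \<longleftrightarrow> simple_graph V E \<and>
     (\<exists>a b :: 'a \<Rightarrow> real. (\<forall>v\<in>V. a v \<le> b v) \<and>
        (\<forall>u\<in>V. \<forall>v\<in>V. u \<noteq> v \<longrightarrow>
            ({u, v} \<in> E \<longleftrightarrow> max (a u) (a v) \<le> min (b u) (b v))))"

definition is_clique :: "'a set \<Rightarrow> 'a set set \<Rightarrow> 'a set \<Rightarrow> bool" where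
  "is_clique V E C \<longleftrightarrow> C \<subseteq> V \<and> (\<forall>u\<in>C. \<forall>v\<in>C. u \<noteq> v \<longrightarrow> {u, v} \<in> E)"

definition max_cliques :: "'a set \<Rightarrow> 'a set set \<Rightarrow> 'a set set" where
  "max_cliques V E = {C. is_clique V E C \<and> (\<forall>D. is_clique V E D \<and> C \<subseteq> D \<longrightarrow> D = C)}"

text \<open>A P-node carries a set and a list of (nonempty) child subtrees; a Q-node carries
  a list of positions, position i consisting of the section S_i and the (possibly
  empty, i.e. None) child subtree T_i.\<close>

datatype 'a mpq = PNode "'a set" "'a mpq list" | QNode "('a set \<times> 'a mpq option) list"

fun allverts :: "'a mpq \<Rightarrow> 'a set" where
  "allverts (PNode S cs) = S \<union> \<Union> (set (map allverts cs))"
| "allverts (QNode ps) = \<Union> (set (map (\<lambda>(S, t). S \<union> (case t of None \<Rightarrow> {} | Some c \<Rightarrow> allverts c)) ps))"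

definition optverts :: "'a mpq option \<Rightarrow> 'a set" where
  "optverts t = (case t of None \<Rightarrow> {} | Some c \<Rightarrow> allverts c)"

fun subtrees :: "'a mpq \<Rightarrow> 'a mpq list" where
  "subtrees (PNode S cs) = PNode S cs # concat (map subtrees cs)"
| "subtrees (QNode ps) = QNode ps # concat (map (\<lambda>(S, t). case t of None \<Rightarrow> [] | Some c \<Rightarrow> subtrees c) ps)"

text \<open>The cliques given by the descending paths from the root, read left to right.\<close>

fun cliques :: "'a mpq \<Rightarrow> 'a set list" where
  "cliques (PNode S cs) = (if cs = [] then [S] else map (\<lambda>C. S \<union> C) (concat (map cliques cs)))"
| "cliques (QNode ps) = concat (map (\<lambda>(S, t). case t of None \<Rightarrow> [S] | Some c \<Rightarrow> map (\<lambda>C. S \<union> C) (cliques c)) ps)"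

inductive mpq_equiv :: "'a mpq \<Rightarrow> 'a mpq \<Rightarrow> bool" where
  P: "list_all2 mpq_equiv cs ds \<Longrightarrow> mset es = mset ds \<Longrightarrow> mpq_equiv (PNode S cs) (PNode S es)"
| Q: "list_all2 (rel_prod (=) (rel_option mpq_equiv)) ps qs \<Longrightarrow>
      (rs = qs \<or> rs = rev qs) \<Longrightarrow> mpq_equiv (QNode ps) (QNode rs)"
monos list_all2_mono prod.rel_mono option.rel_mono

definition consecutive_order :: "'a set list \<Rightarrow> bool" where
  "consecutive_order L \<longleftrightarrow> (\<forall>v i j k. i < j \<and> j < k \<and> k < length L \<and> v \<in> L ! i \<and> v \<in> L ! k \<longrightarrow> v \<in> L ! j)"

text \<open>Local conditions at a node (vertex assignment in a Q-node, disjointness of the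
  assignment, and conditions (a)--(h); (i) holds by construction of the datatype).\<close>

fun node_ok :: "'a mpq \<Rightarrow> bool" where
  "node_ok (PNode S cs) \<longleftrightarrow>
     (\<forall>c\<in>set cs. S \<inter> allverts c = {}) \<and>
     (\<forall>i<length cs. \<forall>j<length cs. i \<noteq> j \<longrightarrow> allverts (cs ! i) \<inter> allverts (cs ! j) = {}) \<and>
     \<comment> \<open>(g)\<close>
     (S = {} \<longrightarrow> (\<forall>c\<in>set cs. \<forall>cs'. c \<noteq> PNode {} cs')) \<and>
     \<comment> \<open>(h)\<close>
     (\<forall>S' cs'. cs \<noteq> [PNode S' cs'])"
| "node_ok (QNode ps) \<longleftrightarrow>
     (let k = length ps; Sec = (\<lambda>i. fst (ps ! i)); Vi = (\<lambda>i. optverts (snd (ps ! i))) in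
      k \<ge> 3 \<and>
      \<comment> \<open>each vertex of the Q-node lies in exactly the sections l..r, l < r\<close>
      (\<forall>v\<in>(\<Union>i<k. Sec i). \<exists>l r. l < r \<and> r < k \<and> (\<forall>i<k. v \<in> Sec i \<longleftrightarrow> l \<le> i \<and> i \<le> r)) \<and>
      \<comment> \<open>disjointness of the assignment\<close>
      (\<forall>i<k. (\<Union>j<k. Sec j) \<inter> Vi i = {}) \<and>
      (\<forall>i<k. \<forall>j<k. i \<noteq> j \<longrightarrow> Vi i \<inter> Vi j = {}) \<and>
      \<comment> \<open>(a)\<close>
      Vi 0 \<noteq> {} \<and> Vi (k - 1) \<noteq> {} \<and>
      \<comment> \<open>(b)\<close>
      Sec 0 \<subseteq> Sec 1 \<and> Sec (k - 1) \<subseteq> Sec (k - 2) \<and>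
      \<comment> \<open>(c), (d), (f)\<close>
      (\<forall>i. 1 \<le> i \<and> i < k \<longrightarrow>
          Sec (i - 1) \<inter> Sec i \<noteq> {} \<and> Sec (i - 1) \<noteq> Sec i \<and>
          (Sec (i - 1) \<union> Vi (i - 1)) - Sec i \<noteq> {} \<and> (Sec i \<union> Vi i) - Sec (i - 1) \<noteq> {}) \<and>
      \<comment> \<open>(e)\<close>
      (\<forall>i. 1 \<le> i \<and> i \<le> k - 2 \<longrightarrow>
          (Sec i \<inter> Sec (i + 1)) - Sec 0 \<noteq> {} \<and> (Sec (i - 1) \<inter> Sec i) - Sec (k - 1) \<noteq> {}))"

definition is_mpq_tree :: "'a set \<Rightarrow> 'a set set \<Rightarrow> 'a mpq \<Rightarrow> bool" where
  "is_mpq_tree V E T \<longleftrightarrow>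
     interval_graph V E \<and>
     allverts T = V \<and>
     (\<forall>N\<in>set (subtrees T). node_ok N) \<and>
     distinct (cliques T) \<and> set (cliques T) = max_cliques V E \<and>
     {cliques T' | T'. mpq_equiv T T'} =
       {L. distinct L \<and> set L = max_cliques V E \<and> consecutive_order L}"

end

theory Submission imports Defs begin

text \<open>A vertex of a leaf P-node is reached only by the one root path that ends in that leaf,
  so all vertices of the leaf lie in a single maximal clique C. In an interval model the
  intervals of C share the point L = max of their left endpoints, and since every neighbour of
  x or y lies in C, these neighbours are exactly the vertices whose intervals contain L.
  Doubling L into [L, L + 1] and giving x the interval [L, L] and y the interval [L + 1, L + 1]
  separates x from y and keeps all other adjacencies.\<close>

definition interval_model :: "'a set \<Rightarrow> 'a set set \<Rightarrow> ('a \<Rightarrow> real) \<Rightarrow> ('a \<Rightarrow> real) \<Rightarrow> bool" where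
  "interval_model V E a b \<longleftrightarrow> (\<forall>v\<in>V. a v \<le> b v) \<and>
     (\<forall>u\<in>V. \<forall>v\<in>V. u \<noteq> v \<longrightarrow> ({u, v} \<in> E \<longleftrightarrow> max (a u) (a v) \<le> min (b u) (b v)))"

lemma interval_graph_iff_model:
  "interval_graph V E \<longleftrightarrow> simple_graph V E \<and> (\<exists>a b. interval_model V E a b)"
  unfolding interval_graph_def interval_model_def by blast

lemma interval_model_delete_edge_at_point:
  assumes model: "interval_model V E a b" and "x \<noteq> y"
    and stab: "\<And>w v. w \<in> {x, y} \<Longrightarrow> v \<in> V \<Longrightarrow> v \<noteq> w \<Longrightarrow> {w, v} \<in> E \<longleftrightarrow> a v \<le> L \<and> L \<le> b v"
  shows "\<exists>a' b'. interval_model V (E - {{x, y}}) a' b'"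
proof -
  define a' where "a' v = (if v = x then L else if v = y then L + 1 else if a v \<le> L then a v else a v + 1)" for v
  define b' where "b' v = (if v = x then L else if v = y then L + 1 else if b v < L then b v else b v + 1)" for v
  have ab: "\<forall>v\<in>V. a v \<le> b v"
    and rep: "\<forall>u\<in>V. \<forall>v\<in>V. u \<noteq> v \<longrightarrow> ({u, v} \<in> E \<longleftrightarrow> max (a u) (a v) \<le> min (b u) (b v))"
    using model by (auto simp: interval_model_def)
  have meets_xy: "max (a' w) (a' z) \<le> min (b' w) (b' z) \<longleftrightarrow> {w, z} \<in> E - {{x, y}}"
    if "w \<in> {x, y}" "z \<in> V" "z \<notin> {x, y}" for w z
  proof -
    have "{w, z} \<noteq> {x, y}" using that by (auto simp: doubleton_eq_iff)
    moreover have "max (a' w) (a' z) \<le> min (b' w) (b' z) \<longleftrightarrow> a z \<le> L \<and> L \<le> b z"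
      using that \<open>x \<noteq> y\<close> by (auto simp: a'_def b'_def)
    ultimately show ?thesis using stab[of w z] that by auto
  qed
  have "max (a' u) (a' v) \<le> min (b' u) (b' v) \<longleftrightarrow> {u, v} \<in> E - {{x, y}}"
    if uv: "u \<in> V" "v \<in> V" "u \<noteq> v" for u v
  proof -
    consider "u \<in> {x, y}" "v \<in> {x, y}" | "u \<in> {x, y}" "v \<notin> {x, y}" | "u \<notin> {x, y}" "v \<in> {x, y}"
      | "u \<notin> {x, y}" "v \<notin> {x, y}" by blast
    then show ?thesis
    proof cases
      case 1
      then show ?thesis using uv \<open>x \<noteq> y\<close> by (auto simp: a'_def b'_def)
    next
      case 2
      then show ?thesis using meets_xy uv by blast
    next
      case 3
      then show ?thesis using meets_xy[of v u] uv by (simp add: insert_commute max.commute min.commute)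
    next
      case 4
      have "max (a' u) (a' v) \<le> min (b' u) (b' v) \<longleftrightarrow> max (a u) (a v) \<le> min (b u) (b v)"
        using 4 by (auto simp: a'_def b'_def)
      moreover have "{u, v} \<noteq> {x, y}" using 4 by auto
      ultimately show ?thesis using rep uv by blast
    qed
  qed
  moreover have "\<forall>v\<in>V. a' v \<le> b' v" using ab by (auto simp: a'_def b'_def)
  ultimately show ?thesis unfolding interval_model_def by blast
qed

lemma interval_model_clique_common_point:
  assumes model: "interval_model V E a b" and "is_clique V E C" "finite C" "C \<noteq> {}"
  shows "\<forall>w\<in>C. a w \<le> Max (a ` C) \<and> Max (a ` C) \<le> b w"
proof
  fix w assume "w \<in> C"
  have "Max (a ` C) \<in> a ` C" using \<open>finite C\<close> \<open>C \<noteq> {}\<close> by simp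
  then obtain w' where w': "w' \<in> C" "Max (a ` C) = a w'" by blast
  have "a w' \<le> b w"
  proof (cases "w' = w")
    case True
    then show ?thesis using model \<open>w \<in> C\<close> \<open>is_clique V E C\<close> by (auto simp: interval_model_def is_clique_def)
  next
    case False
    moreover have "{w', w} \<in> E" "w' \<in> V" "w \<in> V"
      using \<open>is_clique V E C\<close> w'(1) \<open>w \<in> C\<close> False by (auto simp: is_clique_def)
    ultimately have "max (a w') (a w) \<le> min (b w') (b w)"
      using model unfolding interval_model_def by blast
    then show ?thesis by simp
  qed
  moreover have "a w \<le> Max (a ` C)" using \<open>finite C\<close> \<open>w \<in> C\<close> by (intro Max_ge) auto
  ultimately show "a w \<le> Max (a ` C) \<and> Max (a ` C) \<le> b w" using w'(2) by simp
qed

lemma clique_subset_max_clique: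
  assumes "finite V" "is_clique V E K"
  shows "\<exists>M\<in>max_cliques V E. K \<subseteq> M"
proof -
  let ?A = "{D. is_clique V E D \<and> K \<subseteq> D}"
  have "?A \<subseteq> Pow V" by (auto simp: is_clique_def)
  then have "finite ?A" using \<open>finite V\<close> by (simp add: finite_subset)
  moreover have "K \<in> ?A" using assms(2) by blast
  ultimately obtain M where M: "M \<in> ?A" "\<forall>D\<in>?A. M \<le> D \<longrightarrow> M = D"
    using finite_has_maximal[of ?A] by blast
  then have "M \<in> max_cliques V E" unfolding max_cliques_def by auto
  with M(1) show ?thesis by blast
qed

lemma neighbour_mem_unique_max_clique:
  assumes "simple_graph V E" and "{w, v} \<in> E"
    and unique: "\<forall>M\<in>max_cliques V E. w \<in> M \<longrightarrow> M = C"
  shows "v \<in> C"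
proof -
  have "w \<noteq> v" "w \<in> V" "v \<in> V"
    using assms(1,2) unfolding simple_graph_def by (auto simp: doubleton_eq_iff)
  moreover have "{v, w} \<in> E" using assms(2) by (metis insert_commute)
  ultimately have "is_clique V E {w, v}" using assms(2) unfolding is_clique_def by blast
  moreover have "finite V" using assms(1) by (simp add: simple_graph_def)
  ultimately obtain M where "M \<in> max_cliques V E" "{w, v} \<subseteq> M"
    using clique_subset_max_clique by blast
  then show ?thesis using unique by auto
qed

theorem interval_graph_delete_edge_in_unique_max_clique:
  assumes "interval_graph V E" "x \<noteq> y" "C \<in> max_cliques V E" "x \<in> C" "y \<in> C"
    and unique: "\<forall>w\<in>{x, y}. \<forall>M\<in>max_cliques V E. w \<in> M \<longrightarrow> M = C"
  shows "interval_graph V (E - {{x, y}})"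
proof -
  obtain a b where model: "interval_model V E a b" and sg: "simple_graph V E"
    using assms(1) unfolding interval_graph_iff_model by blast
  have clique: "is_clique V E C" using assms(3) by (simp add: max_cliques_def)
  then have "C \<subseteq> V" by (simp add: is_clique_def)
  moreover have "finite V" using sg by (simp add: simple_graph_def)
  ultimately have "finite C" by (rule finite_subset)
  define L where "L = Max (a ` C)"
  have stab_C: "\<forall>w\<in>C. a w \<le> L \<and> L \<le> b w"
    unfolding L_def using interval_model_clique_common_point[OF model clique \<open>finite C\<close>] assms(4) by blast
  have stab: "{w, v} \<in> E \<longleftrightarrow> a v \<le> L \<and> L \<le> b v"
    if "w \<in> {x, y}" "v \<in> V" "v \<noteq> w" for w v
  proof
    assume "{w, v} \<in> E"
    moreover have "\<forall>M\<in>max_cliques V E. w \<in> M \<longrightarrow> M = C" using unique that(1) by blast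
    ultimately have "v \<in> C" by (rule neighbour_mem_unique_max_clique[OF sg])
    then show "a v \<le> L \<and> L \<le> b v" using stab_C by blast
  next
    assume "a v \<le> L \<and> L \<le> b v"
    moreover have "w \<in> C" using that(1) assms(4,5) by blast
    moreover have "a w \<le> L \<and> L \<le> b w" using stab_C \<open>w \<in> C\<close> by blast
    ultimately have "max (a w) (a v) \<le> min (b w) (b v)" by simp
    moreover have "w \<in> V" using \<open>w \<in> C\<close> \<open>C \<subseteq> V\<close> by blast
    moreover have "w \<noteq> v" using that(3) by simp
    ultimately show "{w, v} \<in> E"
      using model that(2) unfolding interval_model_def by blast
  qed
  have "\<exists>a' b'. interval_model V (E - {{x, y}}) a' b'"
    by (rule interval_model_delete_edge_at_point[OF model \<open>x \<noteq> y\<close> stab])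
  moreover have "simple_graph V (E - {{x, y}})" using sg unfolding simple_graph_def by blast
  ultimately show ?thesis unfolding interval_graph_iff_model by blast
qed

lemma cliques_subset_allverts: "C \<in> set (cliques T) \<Longrightarrow> C \<subseteq> allverts T"
proof (induction T arbitrary: C rule: cliques.induct)
  case (1 S cs)
  then show ?case by (fastforce split: if_splits)
next
  case (2 ps)
  then show ?case by (fastforce split: option.splits)
qed

lemma allverts_subtree_subset: "T' \<in> set (subtrees T) \<Longrightarrow> allverts T' \<subseteq> allverts T"
proof (induction T rule: subtrees.induct)
  case (1 S cs)
  then show ?case by fastforce
next
  case (2 ps)
  then show ?case by (fastforce split: option.splits)
qed

lemma cliques_PNode_containing_child_vertex:
  assumes ok: "node_ok (PNode S cs)" and "c \<in> set cs" "v \<in> allverts c"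
  shows "{C \<in> set (cliques (PNode S cs)). v \<in> C} = (\<union>) S ` {D \<in> set (cliques c). v \<in> D}"
proof
  have child_unique: "c' = c" if "c' \<in> set cs" "v \<in> allverts c'" for c'
  proof (rule ccontr)
    assume "c' \<noteq> c"
    obtain i j where "i < length cs" "j < length cs" "cs ! i = c" "cs ! j = c'"
      using \<open>c \<in> set cs\<close> \<open>c' \<in> set cs\<close> by (meson in_set_conv_nth)
    with \<open>c' \<noteq> c\<close> have "allverts c \<inter> allverts c' = {}" using ok by (metis node_ok.simps(1))
    then show False using \<open>v \<in> allverts c\<close> \<open>v \<in> allverts c'\<close> by blast
  qed
  have "v \<notin> S" using ok \<open>c \<in> set cs\<close> \<open>v \<in> allverts c\<close> by auto
  show "{C \<in> set (cliques (PNode S cs)). v \<in> C} \<subseteq> (\<union>) S ` {D \<in> set (cliques c). v \<in> D}"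
  proof clarify
    fix C assume "C \<in> set (cliques (PNode S cs))" "v \<in> C"
    then obtain c' D where "c' \<in> set cs" "D \<in> set (cliques c')" "C = S \<union> D"
      using \<open>c \<in> set cs\<close> by (auto split: if_splits)
    moreover have "v \<in> D" using \<open>v \<in> C\<close> \<open>v \<notin> S\<close> \<open>C = S \<union> D\<close> by blast
    moreover have "c' = c"
      using child_unique \<open>c' \<in> set cs\<close> cliques_subset_allverts[OF \<open>D \<in> set (cliques c')\<close>] \<open>v \<in> D\<close> by blast
    ultimately show "C \<in> (\<union>) S ` {D \<in> set (cliques c). v \<in> D}" by blast
  qed
  show "(\<union>) S ` {D \<in> set (cliques c). v \<in> D} \<subseteq> {C \<in> set (cliques (PNode S cs)). v \<in> C}"
    using \<open>c \<in> set cs\<close> by auto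
qed

lemma cliques_QNode_containing_child_vertex:
  assumes ok: "node_ok (QNode ps)" and "(Si, Some c) \<in> set ps" "v \<in> allverts c"
  shows "{C \<in> set (cliques (QNode ps)). v \<in> C} = (\<union>) Si ` {D \<in> set (cliques c). v \<in> D}"
proof
  obtain i where i: "i < length ps" "ps ! i = (Si, Some c)"
    using \<open>(Si, Some c) \<in> set ps\<close> by (meson in_set_conv_nth)
  have v_i: "v \<in> optverts (snd (ps ! i))" using i \<open>v \<in> allverts c\<close> by (simp add: optverts_def)
  have sections_disjoint: "\<forall>i<length ps. (\<Union>j<length ps. fst (ps ! j)) \<inter> optverts (snd (ps ! i)) = {}"
    and subtrees_disjoint: "\<forall>i<length ps. \<forall>j<length ps. i \<noteq> j \<longrightarrow> optverts (snd (ps ! i)) \<inter> optverts (snd (ps ! j)) = {}"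
    using ok by (simp_all add: Let_def)
  show "{C \<in> set (cliques (QNode ps)). v \<in> C} \<subseteq> (\<union>) Si ` {D \<in> set (cliques c). v \<in> D}"
  proof clarify
    fix C assume "C \<in> set (cliques (QNode ps))" "v \<in> C"
    then obtain Sj t where "(Sj, t) \<in> set ps"
      and C: "C \<in> set (case t of None \<Rightarrow> [Sj] | Some c' \<Rightarrow> map ((\<union>) Sj) (cliques c'))"
      by auto
    then obtain j where j: "j < length ps" "ps ! j = (Sj, t)" by (meson in_set_conv_nth)
    have "v \<notin> Sj" using sections_disjoint i(1) j v_i by force
    then obtain c' D where t: "t = Some c'" and D: "D \<in> set (cliques c')" "C = Sj \<union> D" "v \<in> D"
      using C \<open>v \<in> C\<close> by (auto split: option.splits)
    have "v \<in> optverts (snd (ps ! j))"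
      using cliques_subset_allverts[OF D(1)] D(3) j(2) t by (auto simp: optverts_def)
    then have "j = i" using subtrees_disjoint i(1) j(1) v_i by blast
    then show "C \<in> (\<union>) Si ` {D \<in> set (cliques c). v \<in> D}" using i j t D by auto
  qed
  show "(\<union>) Si ` {D \<in> set (cliques c). v \<in> D} \<subseteq> {C \<in> set (cliques (QNode ps)). v \<in> C}"
    using \<open>(Si, Some c) \<in> set ps\<close> by force
qed

lemma leaf_PNode_vertices_unique_clique:
  "PNode S [] \<in> set (subtrees T) \<Longrightarrow> \<forall>N\<in>set (subtrees T). node_ok N \<Longrightarrow>
   \<exists>C0\<in>set (cliques T). \<forall>x\<in>S. {C \<in> set (cliques T). x \<in> C} = {C0}"
proof (induction T rule: subtrees.induct)
  case (1 S' cs)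
  show ?case
  proof (cases "PNode S [] = PNode S' cs")
    case True
    then show ?thesis by auto
  next
    case False
    with "1.prems"(1) obtain c where c: "c \<in> set cs" "PNode S [] \<in> set (subtrees c)" by auto
    have "\<forall>N\<in>set (subtrees c). node_ok N" using "1.prems"(2) c(1) by auto
    then obtain C0 where "C0 \<in> set (cliques c)" and C0: "\<forall>x\<in>S. {C \<in> set (cliques c). x \<in> C} = {C0}"
      using "1.IH"[OF c] by blast
    have ok: "node_ok (PNode S' cs)" using "1.prems"(2) by simp
    have "{C \<in> set (cliques (PNode S' cs)). x \<in> C} = {S' \<union> C0}" if "x \<in> S" for x
    proof -
      have "x \<in> allverts c" using allverts_subtree_subset[OF c(2)] that by auto
      then show ?thesis using cliques_PNode_containing_child_vertex[OF ok c(1)] C0 that by simp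
    qed
    moreover have "S' \<union> C0 \<in> set (cliques (PNode S' cs))" using c(1) \<open>C0 \<in> set (cliques c)\<close> by auto
    ultimately show ?thesis by blast
  qed
next
  case (2 ps)
  from "2.prems"(1) obtain Si c where c: "(Si, Some c) \<in> set ps" "PNode S [] \<in> set (subtrees c)"
    by (auto split: option.splits)
  have "\<forall>N\<in>set (subtrees c). node_ok N" using "2.prems"(2) c(1) by (force split: option.splits)
  then obtain C0 where "C0 \<in> set (cliques c)" and C0: "\<forall>x\<in>S. {C \<in> set (cliques c). x \<in> C} = {C0}"
    using "2.IH"[OF c(1) refl _ c(2)] by blast
  have ok: "node_ok (QNode ps)" using "2.prems"(2) by simp
  have "{C \<in> set (cliques (QNode ps)). x \<in> C} = {Si \<union> C0}" if "x \<in> S" for x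
  proof -
    have "x \<in> allverts c" using allverts_subtree_subset[OF c(2)] that by auto
    then show ?thesis using cliques_QNode_containing_child_vertex[OF ok c(1)] C0 that by simp
  qed
  moreover have "Si \<union> C0 \<in> set (cliques (QNode ps))" using c(1) \<open>C0 \<in> set (cliques c)\<close> by force
  ultimately show ?case by blast
qed

theorem mainTheorem3:
  fixes V :: "'a set" and E :: "'a set set" and T :: "'a mpq"
    and S :: "'a set" and x y :: 'a
  assumes "interval_graph V E"
    and "is_mpq_tree V E T"
    and "PNode S [] \<in> set (subtrees T)"
    and "x \<in> S" and "y \<in> S" and "x \<noteq> y"
  shows "interval_graph V (E - {{x, y}})"
proof -
  have ok: "\<forall>N\<in>set (subtrees T). node_ok N" and cl: "set (cliques T) = max_cliques V E"
    using assms(2) by (auto simp: is_mpq_tree_def)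
  obtain C0 where "C0 \<in> set (cliques T)" and C0: "\<forall>w\<in>S. {C \<in> set (cliques T). w \<in> C} = {C0}"
    using leaf_PNode_vertices_unique_clique[OF assms(3) ok] by blast
  have "x \<in> C0" "y \<in> C0" using C0 assms(4,5) by blast+
  moreover have "\<forall>w\<in>{x, y}. \<forall>M\<in>max_cliques V E. w \<in> M \<longrightarrow> M = C0"
    using C0 assms(4,5) cl by blast
  moreover have "C0 \<in> max_cliques V E" using \<open>C0 \<in> set (cliques T)\<close> cl by simp
  ultimately show ?thesis
    using interval_graph_delete_edge_in_unique_max_clique[OF assms(1,6)] by blast
qed
end
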